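(* $$\sum_{n=1}^\infty \frac{H_n \binom{2n}{n}}{(2n-1)^2\, 2^{2n}} = \pi(1-\log 2) - 4(1-G),$$ where $G$ is Catalan's constant.
   Context: $H_n=\sum_{k=1}^n \frac{1}{k}$ denotes the $n$-th harmonic number and $\binom{2n}{n}$ the central binomial coefficient; $G=\sum_{n=0}^\infty \frac{(-1)^n}{(2n+1)^2}$ is Catalan's constant; $\log$ is the natural logarithm. *)

theory Defs
  imports "HOL-Analysis.Analysis"
begin

definition catalan :: real where
  "catalan = (\<Sum>n. (-1) ^ n / (2 * real n + 1) ^ 2)"

end

(*
  Write c n = (2n choose n) / 4^n.  Integrating the binomial series of 1/sqrt(1 - x) twice gives
    sum_n c (n+1) / (2n+1)^2 * t^(2n+2) = t arcsin t + sqrt (1 - t^2) - 1     for |t| <= 1,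
  and H_m is the integral of 2 tan x (1 - sin x ^ 2m) over [0, pi/2].  All terms being
  nonnegative, the sum may be taken under the integral; with t = sin x the series becomes the
  integral of 2 tan x (pi/2 - x sin x - cos x).  Up to the derivative of an elementary function
  this integrand is (pi - 2x) / cos x, whose integral the substitution y = tan (pi/4 - x/2)
  turns into 4 Ti_2(1) = 4 G, Ti_2 being the inverse tangent integral.
*)
theory Submission
  imports Defs
begin

section \<open>Central binomial coefficients\<close>

definition scaled_central_binomial :: "nat \<Rightarrow> real" where
  "scaled_central_binomial n = real ((2 * n) choose n) / 4 ^ n"

lemma scaled_central_binomial_nonneg: "0 \<le> scaled_central_binomial n"
  by (simp add: scaled_central_binomial_def)

lemma scaled_central_binomial_le_1: "scaled_central_binomial n \<le> 1"
proof -
  have "real ((2 * n) choose n) \<le> 2 ^ (2 * n)"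
    using binomial_le_pow2[of "2 * n" n] by (metis of_nat_le_iff of_nat_numeral of_nat_power)
  then show ?thesis
    by (simp add: scaled_central_binomial_def power_mult)
qed

lemma scaled_central_binomial_pochhammer:
  "scaled_central_binomial n = pochhammer (1/2) n / fact n"
  by (simp add: scaled_central_binomial_def binomial_fact fact_double power_mult)

lemma scaled_central_binomial_Suc:
  "scaled_central_binomial (Suc n) = (2 * real n + 1) / (2 * real n + 2) * scaled_central_binomial n"
  by (simp add: scaled_central_binomial_pochhammer pochhammer_rec' field_simps)

lemma scaled_central_binomial_sums:
  assumes "\<bar>x\<bar> < 1"
  shows "(\<lambda>n. scaled_central_binomial n * x ^ n) sums (1 / sqrt (1 - x))"
proof -
  have "(\<lambda>n. ((-1/2 :: real) gchoose n) * (-x) ^ n) sums (1 + (-x)) powr (-1/2)"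
    by (rule gen_binomial_real) (use assms in auto)
  moreover have "((-1/2 :: real) gchoose n) * (-x) ^ n = scaled_central_binomial n * x ^ n" for n
  proof -
    have "((-1/2 :: real) gchoose n) = (-1) ^ n * scaled_central_binomial n"
      by (simp add: scaled_central_binomial_pochhammer gbinomial_pochhammer)
    then show ?thesis by (simp add: power_minus[of x])
  qed
  moreover have "(1 + (-x)) powr (-1/2) = 1 / sqrt (1 - x)"
    using assms by (simp add: powr_minus_divide powr_half_sqrt)
  ultimately show ?thesis by simp
qed

section \<open>Termwise differentiation on the unit interval\<close>

lemma DERIV_monomial:
  "((\<lambda>y. a * y ^ (k + 1)) has_real_derivative a * (real k + 1) * y ^ k) (at y)"
  using DERIV_cmult[OF DERIV_pow[of "k + 1" y], of a] by (simp add: mult.assoc add.commute)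

lemma has_field_derivative_series_unit_interval:
  fixes f f' :: "nat \<Rightarrow> real \<Rightarrow> real"
  assumes deriv: "\<And>n y. \<bar>y\<bar> < 1 \<Longrightarrow> (f n has_field_derivative f' n y) (at y)"
    and bound: "\<And>n y. \<bar>y\<bar> < 1 \<Longrightarrow> \<bar>f' n y\<bar> \<le> \<bar>y\<bar> ^ n"
    and summable_0: "summable (\<lambda>n. f n 0)"
    and x: "\<bar>x\<bar> < 1"
  shows "summable (\<lambda>n. f n x)"
    and "((\<lambda>x. \<Sum>n. f n x) has_field_derivative (\<Sum>n. f' n x)) (at x)"
proof -
  define r where "r = (\<bar>x\<bar> + 1) / 2"
  have r: "\<bar>x\<bar> < r" "r < 1" using x by (auto simp: r_def)
  have "uniform_limit {-r<..<r} (\<lambda>n y. \<Sum>i<n. f' i y) (\<lambda>y. \<Sum>i. f' i y) sequentially"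
  proof (rule Weierstrass_m_test)
    show "summable (\<lambda>n. r ^ n)"
      using r by (intro summable_geometric) auto
    fix n and y :: real
    assume "y \<in> {-r<..<r}"
    then have y: "\<bar>y\<bar> \<le> r" "\<bar>y\<bar> < 1" using r by auto
    have "\<bar>y\<bar> ^ n \<le> r ^ n" using y by (intro power_mono) auto
    then show "norm (f' n y) \<le> r ^ n" using bound[OF y(2), of n] by simp
  qed
  then have uniform: "uniformly_convergent_on {-r<..<r} (\<lambda>n y. \<Sum>i<n. f' i y)"
    unfolding uniformly_convergent_on_def by blast
  have deriv_within: "(f n has_field_derivative f' n y) (at y within {-r<..<r})"
    if "y \<in> {-r<..<r}" for n y
  proof -
    have "\<bar>y\<bar> < 1" using that r by auto
    then show ?thesis by (rule has_field_derivative_at_within[OF deriv])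
  qed
  have interior: "x \<in> interior {-r<..<r}"
    using r by (simp add: interior_open abs_less_iff)
  have "0 \<in> {-r<..<r}" using r by simp
  note series = has_field_derivative_series'[OF convex_real_interval(8)]
  show "summable (\<lambda>n. f n x)"
    using deriv_within uniform \<open>0 \<in> {-r<..<r}\<close> summable_0 interior by (rule series(1))
  show "((\<lambda>x. \<Sum>n. f n x) has_field_derivative (\<Sum>n. f' n x)) (at x)"
    using deriv_within uniform \<open>0 \<in> {-r<..<r}\<close> summable_0 interior by (rule series(2))
qed

lemma sums_from_termwise_derivative:
  fixes f f' :: "nat \<Rightarrow> real \<Rightarrow> real" and F F' :: "real \<Rightarrow> real"
  assumes deriv: "\<And>n y. \<bar>y\<bar> < 1 \<Longrightarrow> (f n has_field_derivative f' n y) (at y)"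
    and bound: "\<And>n y. \<bar>y\<bar> < 1 \<Longrightarrow> \<bar>f' n y\<bar> \<le> \<bar>y\<bar> ^ n"
    and F_deriv: "\<And>y. \<bar>y\<bar> < 1 \<Longrightarrow> (F has_field_derivative F' y) (at y)"
    and sums_deriv: "\<And>y. \<bar>y\<bar> < 1 \<Longrightarrow> (\<lambda>n. f' n y) sums F' y"
    and sums_0: "(\<lambda>n. f n 0) sums F 0"
    and x: "\<bar>x\<bar> < 1"
  shows "(\<lambda>n. f n x) sums F x"
proof -
  have summable: "summable (\<lambda>n. f n y)" if "\<bar>y\<bar> < 1" for y
    using deriv bound sums_summable[OF sums_0] that by (rule has_field_derivative_series_unit_interval(1))
  have series_deriv: "((\<lambda>x. \<Sum>n. f n x) has_field_derivative (\<Sum>n. f' n y)) (at y)"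
    if "\<bar>y\<bar> < 1" for y
    using deriv bound sums_summable[OF sums_0] that by (rule has_field_derivative_series_unit_interval(2))
  have "\<exists>c. \<forall>y\<in>{-1<..<1}. (\<Sum>n. f n y) - F y = c"
  proof (rule has_field_derivative_zero_constant)
    fix y :: real
    assume "y \<in> {-1<..<1}"
    then have y: "\<bar>y\<bar> < 1" by auto
    have "((\<lambda>y. (\<Sum>n. f n y) - F y) has_field_derivative (\<Sum>n. f' n y) - F' y) (at y)"
      by (intro DERIV_diff series_deriv F_deriv y)
    moreover have "(\<Sum>n. f' n y) - F' y = 0"
      using sums_deriv[OF y] by (simp add: sums_iff)
    ultimately show "((\<lambda>y. (\<Sum>n. f n y) - F y) has_field_derivative 0) (at y within {-1<..<1})"
      by (simp add: has_field_derivative_at_within)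
  qed simp
  then obtain c where c: "\<And>y. y \<in> {-1<..<1} \<Longrightarrow> (\<Sum>n. f n y) - F y = c"
    by blast
  have "c = 0" using c[of 0] sums_0 by (simp add: sums_iff)
  moreover have "x \<in> {-1<..<1}" using x by auto
  ultimately show ?thesis
    using c summable[OF x] by (simp add: sums_iff)
qed

section \<open>The arcsin series and its antiderivative\<close>

lemma arcsin_series:
  assumes "\<bar>x\<bar> < 1"
  shows "(\<lambda>n. scaled_central_binomial n / (2 * real n + 1) * x ^ (2 * n + 1)) sums arcsin x"
proof (rule sums_from_termwise_derivative
    [where f' = "\<lambda>n y. scaled_central_binomial n * (y\<^sup>2) ^ n"
      and F' = "\<lambda>y. inverse (sqrt (1 - y\<^sup>2))", OF _ _ _ _ _ assms])
  fix n and y :: real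
  show "((\<lambda>y. scaled_central_binomial n / (2 * real n + 1) * y ^ (2 * n + 1))
          has_field_derivative scaled_central_binomial n * (y\<^sup>2) ^ n) (at y)"
    using DERIV_monomial[of "scaled_central_binomial n / (2 * real n + 1)" "2 * n" y]
    by (simp add: power_mult)
next
  fix n and y :: real
  assume y: "\<bar>y\<bar> < 1"
  have "\<bar>y\<bar> ^ (2 * n) \<le> \<bar>y\<bar> ^ n" using y by (intro power_decreasing) auto
  moreover have "scaled_central_binomial n * \<bar>y\<bar> ^ (2 * n) \<le> \<bar>y\<bar> ^ (2 * n)"
    using scaled_central_binomial_le_1[of n] scaled_central_binomial_nonneg[of n]
    by (intro mult_left_le_one_le) auto
  ultimately show "\<bar>scaled_central_binomial n * (y\<^sup>2) ^ n\<bar> \<le> \<bar>y\<bar> ^ n"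
    using scaled_central_binomial_nonneg[of n] by (simp add: abs_mult power_mult power_abs)
next
  fix y :: real
  assume y: "\<bar>y\<bar> < 1"
  then show "(arcsin has_field_derivative inverse (sqrt (1 - y\<^sup>2))) (at y)"
    by (intro DERIV_arcsin) auto
  show "(\<lambda>n. scaled_central_binomial n * (y\<^sup>2) ^ n) sums inverse (sqrt (1 - y\<^sup>2))"
    using scaled_central_binomial_sums[of "y\<^sup>2"] y
    by (simp add: abs_square_less_1 inverse_eq_divide)
qed simp

lemma summable_inverse_odd_square: "summable (\<lambda>n. 1 / (2 * real n + 1)\<^sup>2)"
proof (rule summable_comparison_test')
  show "summable (\<lambda>n. inverse (real (Suc n) ^ 2))"
    using inverse_power_summable[of 2, where 'a=real] by (subst summable_Suc_iff) simp
  fix n :: nat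
  have "real (Suc n) ^ 2 \<le> (2 * real n + 1) ^ 2" by (intro power_mono) auto
  then show "norm (1 / (2 * real n + 1)\<^sup>2) \<le> inverse (real (Suc n) ^ 2)"
    by (simp add: divide_simps del: of_nat_Suc)
qed

lemma arcsin_antiderivative_series_open:
  assumes "\<bar>t\<bar> < 1"
  shows "(\<lambda>n. scaled_central_binomial (Suc n) / (2 * real n + 1)\<^sup>2 * t ^ (2 * n + 2))
           sums (t * arcsin t + sqrt (1 - t\<^sup>2) - 1)"
proof (rule sums_from_termwise_derivative
    [where f' = "\<lambda>n y. scaled_central_binomial n / (2 * real n + 1) * y ^ (2 * n + 1)"
      and F' = arcsin, OF _ _ _ _ _ assms])
  fix n and y :: real
  have "scaled_central_binomial (Suc n) / (2 * real n + 1)\<^sup>2 * (real (2 * n + 1) + 1)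
          = scaled_central_binomial n / (2 * real n + 1)"
  proof -
    have "scaled_central_binomial (Suc n) / (2 * real n + 1)\<^sup>2 * (real (2 * n + 1) + 1)
        = (2 * real n + 2) * scaled_central_binomial (Suc n) / (2 * real n + 1)\<^sup>2"
      by (simp add: algebra_simps)
    also have "\<dots> = (2 * real n + 1) * scaled_central_binomial n / (2 * real n + 1)\<^sup>2"
      by (simp add: scaled_central_binomial_Suc)
    also have "\<dots> = scaled_central_binomial n / (2 * real n + 1)"
      by (simp add: power2_eq_square)
    finally show ?thesis .
  qed
  then show "((\<lambda>y. scaled_central_binomial (Suc n) / (2 * real n + 1)\<^sup>2 * y ^ (2 * n + 2))
          has_field_derivative scaled_central_binomial n / (2 * real n + 1) * y ^ (2 * n + 1)) (at y)"
    using DERIV_monomial[of "scaled_central_binomial (Suc n) / (2 * real n + 1)\<^sup>2" "2 * n + 1" y]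
    by simp
next
  fix n and y :: real
  assume y: "\<bar>y\<bar> < 1"
  have coeff: "0 \<le> scaled_central_binomial n / (2 * real n + 1)"
      "scaled_central_binomial n / (2 * real n + 1) \<le> 1"
    using scaled_central_binomial_nonneg[of n] scaled_central_binomial_le_1[of n]
    by (simp_all add: field_simps)
  have "\<bar>scaled_central_binomial n / (2 * real n + 1) * y ^ (2 * n + 1)\<bar>
      = scaled_central_binomial n / (2 * real n + 1) * \<bar>y\<bar> ^ (2 * n + 1)"
    by (simp only: abs_mult power_abs abs_of_nonneg[OF coeff(1)])
  also have "\<dots> \<le> \<bar>y\<bar> ^ (2 * n + 1)"
    by (rule mult_left_le_one_le) (use coeff in auto)
  also have "\<dots> \<le> \<bar>y\<bar> ^ n"
    using y by (intro power_decreasing) auto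
  finally show "\<bar>scaled_central_binomial n / (2 * real n + 1) * y ^ (2 * n + 1)\<bar> \<le> \<bar>y\<bar> ^ n" .
next
  fix y :: real
  assume y: "\<bar>y\<bar> < 1"
  then have "0 < 1 - y\<^sup>2" by (simp add: abs_square_less_1)
  with y show "((\<lambda>t. t * arcsin t + sqrt (1 - t\<^sup>2) - 1) has_field_derivative arcsin y) (at y)"
    by (auto intro!: derivative_eq_intros DERIV_arcsin simp: field_simps)
  show "(\<lambda>n. scaled_central_binomial n / (2 * real n + 1) * y ^ (2 * n + 1)) sums arcsin y"
    using arcsin_series[OF y] .
qed simp

lemma sums_at_1_by_continuity:
  fixes a :: "nat \<Rightarrow> real" and k :: "nat \<Rightarrow> nat" and F :: "real \<Rightarrow> real"
  assumes summable: "summable (\<lambda>n. \<bar>a n\<bar>)"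
    and sums: "\<And>t. 0 \<le> t \<Longrightarrow> t < 1 \<Longrightarrow> (\<lambda>n. a n * t ^ k n) sums F t"
    and cont: "continuous_on {0..1} F"
  shows "a sums F 1"
proof -
  define P where "P t = (\<Sum>n. a n * t ^ k n)" for t :: real
  have "continuous_on {0..1} P"
    unfolding P_def
  proof (rule uniform_limit_theorem[OF _ Weierstrass_m_test[OF _ summable]])
    show "\<forall>\<^sub>F n in sequentially. continuous_on {0..1} (\<lambda>t. \<Sum>i<n. a i * t ^ k i)"
      by (intro always_eventually allI continuous_intros)
    fix n and t :: real
    assume "t \<in> {0..1}"
    then have "\<bar>t\<bar> ^ k n \<le> 1" by (intro power_le_one) auto
    then show "norm (a n * t ^ k n) \<le> \<bar>a n\<bar>"
      by (simp add: abs_mult power_abs mult_left_le)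
  qed simp
  with cont have "continuous_on (closure {0..<1}) (\<lambda>t. P t - F t)"
    by (auto intro: continuous_intros)
  moreover have "P t - F t = 0" if "t \<in> {0..<1}" for t
    using sums that by (auto simp: P_def sums_iff)
  ultimately have "P 1 - F 1 = 0"
    using continuous_constant_on_closure[where S = "{0..<1}" and f = "\<lambda>t. P t - F t" and x = 1]
    by simp
  moreover have "a sums P 1"
    using summable_rabs_cancel[OF summable] by (simp add: P_def summable_sums)
  ultimately show ?thesis by simp
qed

lemma arcsin_antiderivative_series:
  assumes "\<bar>t\<bar> \<le> 1"
  shows "(\<lambda>n. scaled_central_binomial (Suc n) / (2 * real n + 1)\<^sup>2 * t ^ (2 * n + 2))
           sums (t * arcsin t + sqrt (1 - t\<^sup>2) - 1)"
proof -
  have at_1: "(\<lambda>n. scaled_central_binomial (Suc n) / (2 * real n + 1)\<^sup>2) sums (pi / 2 - 1)"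
  proof -
    have "(\<lambda>n. scaled_central_binomial (Suc n) / (2 * real n + 1)\<^sup>2)
        sums ((\<lambda>t. t * arcsin t + sqrt (1 - t\<^sup>2) - 1) 1)"
    proof (rule sums_at_1_by_continuity
        [where k = "\<lambda>n. 2 * n + 2" and F = "\<lambda>t. t * arcsin t + sqrt (1 - t\<^sup>2) - 1"])
      show "summable (\<lambda>n. \<bar>scaled_central_binomial (Suc n) / (2 * real n + 1)\<^sup>2\<bar>)"
      proof (rule summable_comparison_test'[OF summable_inverse_odd_square])
        fix n
        show "norm \<bar>scaled_central_binomial (Suc n) / (2 * real n + 1)\<^sup>2\<bar> \<le> 1 / (2 * real n + 1)\<^sup>2"
          using scaled_central_binomial_le_1[of "Suc n"] scaled_central_binomial_nonneg[of "Suc n"]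
          by (simp add: divide_right_mono)
      qed
      show "continuous_on {0..1} (\<lambda>t :: real. t * arcsin t + sqrt (1 - t\<^sup>2) - 1)"
        by (intro continuous_intros) auto
    qed (use arcsin_antiderivative_series_open in auto)
    then show ?thesis by simp
  qed
  consider "\<bar>t\<bar> < 1" | "t = 1" | "t = -1" using assms by linarith
  then show ?thesis
  proof cases
    case 1
    then show ?thesis by (rule arcsin_antiderivative_series_open)
  qed (use at_1 in simp_all)
qed

section \<open>The inverse tangent integral and Catalan's constant\<close>

definition inverse_tangent_integral :: "real \<Rightarrow> real" where
  "inverse_tangent_integral x = (\<Sum>n. (-1) ^ n / (2 * real n + 1)\<^sup>2 * x ^ (2 * n + 1))"

lemma inverse_tangent_integral_0: "inverse_tangent_integral 0 = 0"
  by (simp add: inverse_tangent_integral_def)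

lemma inverse_tangent_integral_1: "inverse_tangent_integral 1 = catalan"
  by (simp add: inverse_tangent_integral_def catalan_def)

lemma continuous_on_inverse_tangent_integral: "continuous_on {-1..1} inverse_tangent_integral"
  unfolding inverse_tangent_integral_def
proof (rule uniform_limit_theorem[OF _ Weierstrass_m_test[OF _ summable_inverse_odd_square]])
  show "\<forall>\<^sub>F n in sequentially.
          continuous_on {-1..1} (\<lambda>t. \<Sum>i<n. (-1) ^ i / (2 * real i + 1)\<^sup>2 * t ^ (2 * i + 1))"
    by (intro always_eventually allI continuous_intros)
  fix n and t :: real
  assume "t \<in> {-1..1}"
  then have "\<bar>t\<bar> ^ (2 * n + 1) \<le> 1" by (intro power_le_one) auto
  then show "norm ((-1) ^ n / (2 * real n + 1)\<^sup>2 * t ^ (2 * n + 1)) \<le> 1 / (2 * real n + 1)\<^sup>2"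
    by (simp add: abs_mult power_abs divide_right_mono)
qed simp

lemma inverse_tangent_integral_has_real_derivative:
  assumes "x \<noteq> 0" "\<bar>x\<bar> < 1"
  shows "(inverse_tangent_integral has_real_derivative arctan x / x) (at x)"
proof -
  define f' where "f' n y = (-1) ^ n / (2 * real n + 1) * y ^ (2 * n)" for n and y :: real
  have deriv: "((\<lambda>y. (-1) ^ n / (2 * real n + 1)\<^sup>2 * y ^ (2 * n + 1)) has_field_derivative f' n y) (at y)"
    for n y
    using DERIV_monomial[of "(-1) ^ n / (2 * real n + 1)\<^sup>2" "2 * n" y]
    by (simp add: f'_def power2_eq_square)
  have bound: "\<bar>f' n y\<bar> \<le> \<bar>y\<bar> ^ n" if "\<bar>y\<bar> < 1" for n y
  proof -
    have "\<bar>f' n y\<bar> \<le> \<bar>y\<bar> ^ (2 * n)"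
      by (simp add: f'_def abs_mult power_abs divide_le_eq mult_le_cancel_left1)
    also have "\<dots> \<le> \<bar>y\<bar> ^ n" using that by (intro power_decreasing) auto
    finally show ?thesis .
  qed
  have "(\<lambda>k. (-1) ^ k * (1 / real (k * 2 + 1) * x ^ (k * 2 + 1))) sums arctan x"
    using summable_arctan_series[of x] arctan_series[of x] assms by (simp add: sums_iff)
  moreover have "(-1) ^ n * (1 / real (n * 2 + 1) * x ^ (n * 2 + 1)) = f' n x * x" for n
    by (simp add: f'_def power_add mult_ac)
  ultimately have "(\<lambda>n. f' n x * x) sums arctan x" by simp
  from sums_divide[OF this, of x] assms(1) have "(\<lambda>n. f' n x) sums (arctan x / x)"
    by simp
  moreover have "summable (\<lambda>n. (-1) ^ n / (2 * real n + 1)\<^sup>2 * 0 ^ (2 * n + 1) :: real)"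
    by simp
  with deriv bound have "(inverse_tangent_integral has_field_derivative (\<Sum>n. f' n x)) (at x)"
    using assms(2) unfolding inverse_tangent_integral_def[abs_def]
    by (rule has_field_derivative_series_unit_interval(2))
  ultimately show ?thesis
    by (simp add: sums_iff)
qed

lemma catalan_integral: "((\<lambda>\<theta>. (pi - 2 * \<theta>) / cos \<theta>) has_integral 4 * catalan) {0..pi/2}"
proof -
  define F where "F \<theta> = - 4 * inverse_tangent_integral (tan (pi/4 - \<theta>/2))" for \<theta>
  have tan_range: "tan (pi/4 - \<theta>/2) \<in> {-1..1}" if "\<theta> \<in> {0..pi/2}" for \<theta>
  proof -
    have bounds: "- (pi/2) < 0" "0 \<le> pi/4 - \<theta>/2" "pi/4 - \<theta>/2 \<le> pi/4" "pi/4 < pi/2"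
      using that pi_gt_zero by auto
    have "tan 0 \<le> tan (pi/4 - \<theta>/2)" "tan (pi/4 - \<theta>/2) \<le> tan (pi/4)"
      by (rule tan_mono_le; use bounds in linarith)+
    then show ?thesis by (simp add: tan_45)
  qed
  have "continuous_on {0..pi/2} (\<lambda>\<theta>. tan (pi/4 - \<theta>/2))"
  proof (intro continuous_intros ballI)
    fix \<theta> :: real
    assume "\<theta> \<in> {0..pi/2}"
    then have "0 \<le> \<theta>" "\<theta> \<le> pi/2" by auto
    with pi_gt_zero have "cos (pi/4 - \<theta>/2) > 0" by (intro cos_gt_zero_pi) linarith+
    then show "cos (pi/4 - \<theta>/2) \<noteq> 0" by simp
  qed simp
  then have "continuous_on {0..pi/2} (\<lambda>\<theta>. inverse_tangent_integral (tan (pi/4 - \<theta>/2)))"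
    by (rule continuous_on_compose2[OF continuous_on_inverse_tangent_integral]) (use tan_range in blast)
  then have cont: "continuous_on {0..pi/2} F"
    unfolding F_def by (intro continuous_intros)
  have deriv: "(F has_real_derivative (pi - 2 * \<theta>) / cos \<theta>) (at \<theta>)" if "\<theta> \<in> {0<..<pi/2}" for \<theta>
  proof -
    define u where "u = pi/4 - \<theta>/2"
    have u: "0 < u" "u < pi/4" using that by (auto simp: u_def)
    have \<theta>_eq: "\<theta> = pi/2 - 2 * u" by (simp add: u_def)
    have cos_u: "cos u > 0" using u by (intro cos_gt_zero_pi) auto
    have sin_u: "sin u > 0" using u by (intro sin_gt_zero) auto
    have tan_u: "0 < tan u" "tan u < 1"
      using u tan_monotone[of u "pi/4"] by (auto simp: tan_45 tan_gt_zero)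
    have Ti_deriv: "(inverse_tangent_integral has_real_derivative arctan (tan u) / tan u)
        (at (tan (pi/4 - \<theta>/2)))"
      using tan_u unfolding u_def by (intro inverse_tangent_integral_has_real_derivative) auto
    have tan_deriv: "((\<lambda>\<theta>. tan (pi/4 - \<theta>/2)) has_real_derivative inverse ((cos u)\<^sup>2) * (- 1/2)) (at \<theta>)"
      using cos_u unfolding u_def by (auto intro!: derivative_eq_intros)
    have "(F has_real_derivative - 4 * (arctan (tan u) / tan u * (inverse ((cos u)\<^sup>2) * (- 1/2)))) (at \<theta>)"
      unfolding F_def using DERIV_chain2[OF Ti_deriv tan_deriv] by (rule DERIV_cmult)
    moreover have "arctan (tan u) = u" using u by (intro arctan_tan) auto
    moreover have "cos \<theta> = 2 * sin u * cos u" "pi - 2 * \<theta> = 4 * u"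
      using \<theta>_eq by (simp_all add: cos_diff sin_double)
    ultimately show ?thesis
      using cos_u sin_u by (simp add: tan_def divide_simps power2_eq_square)
  qed
  have "((\<lambda>\<theta>. (pi - 2 * \<theta>) / cos \<theta>) has_integral F (pi/2) - F 0) {0..pi/2}"
    using deriv cont
    by (intro fundamental_theorem_of_calculus_interior_strong[of "{}"])
      (auto simp: has_real_derivative_iff_has_vector_derivative)
  moreover have "F (pi/2) - F 0 = 4 * catalan"
    by (simp add: F_def tan_45 inverse_tangent_integral_0 inverse_tangent_integral_1)
  ultimately show ?thesis by simp
qed

lemma two_tan_mul_has_integral:
  "((\<lambda>\<theta>. 2 * tan \<theta> * (pi/2 - \<theta> * sin \<theta> - cos \<theta>)) has_integral
      pi * (1 - ln 2) - 4 * (1 - catalan)) {0..pi/2}"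
proof -
  define E where "E \<theta> = - pi * ln (1 + sin \<theta>) + 4 * cos \<theta> + 2 * \<theta> * sin \<theta>" for \<theta>
  define E' where "E' \<theta> = - pi * cos \<theta> / (1 + sin \<theta>) - 2 * sin \<theta> + 2 * \<theta> * cos \<theta>" for \<theta>
  have sin_pos: "1 + sin \<theta> > 0" if "\<theta> \<in> {0..pi/2}" for \<theta>
    using that sin_ge_zero[of \<theta>] pi_gt_zero by auto
  have "(E has_real_derivative E' \<theta>) (at \<theta>)" if "\<theta> \<in> {0<..<pi/2}" for \<theta>
    unfolding E_def E'_def using sin_pos[of \<theta>] that
    by (auto intro!: derivative_eq_intros simp: field_simps)
  moreover have "continuous_on {0..pi/2} E"
    unfolding E_def using sin_pos by (intro continuous_intros) (auto simp: less_imp_neq[symmetric])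
  ultimately have "(E' has_integral E (pi/2) - E 0) {0..pi/2}"
    by (intro fundamental_theorem_of_calculus_interior_strong[of "{}"])
      (auto simp: has_real_derivative_iff_has_vector_derivative)
  from has_integral_add[OF this catalan_integral]
  have sum_integral: "((\<lambda>\<theta>. E' \<theta> + (pi - 2 * \<theta>) / cos \<theta>) has_integral
      pi * (1 - ln 2) - 4 * (1 - catalan)) {0..pi/2}"
    by (simp add: E_def algebra_simps)
  have identity: "2 * (s / c) * (pi/2 - t * s - c) = - pi * c / (1 + s) - 2 * s + 2 * t * c + (pi - 2 * t) / c"
    if "c > 0" "1 + s > 0" "s\<^sup>2 + c\<^sup>2 = 1" for s c t :: real
  proof -
    have "c * c = 1 - s * s" using that(3) by (simp add: power2_eq_square)
    moreover have "c \<noteq> 0" "1 + s \<noteq> 0" "c + c * s \<noteq> 0" "c * (1 + s) \<noteq> 0" "(1 + s) * c \<noteq> 0"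
      using that(1,2) mult_pos_pos[OF that(1,2)] by (auto simp: algebra_simps)
    ultimately show ?thesis by (simp add: field_simps) algebra
  qed
  show ?thesis
  proof (rule has_integral_spike_finite[OF _ _ sum_integral, of "{pi/2}"])
    fix \<theta>
    assume "\<theta> \<in> {0..pi/2} - {pi/2}"
    then have "cos \<theta> > 0" "1 + sin \<theta> > 0"
      using sin_pos by (auto intro!: cos_gt_zero_pi)
    then show "2 * tan \<theta> * (pi/2 - \<theta> * sin \<theta> - cos \<theta>) = E' \<theta> + (pi - 2 * \<theta>) / cos \<theta>"
      unfolding E'_def tan_def by (rule identity) (rule sin_cos_squared_add)
  qed simp
qed

section \<open>Harmonic numbers as integrals and the main series\<close>

lemma two_tan_mul_one_minus_sin_power:
  fixes \<theta> :: real
  shows "2 * tan \<theta> * (1 - sin \<theta> ^ (2 * n)) = (\<Sum>j<n. 2 * sin \<theta> ^ (2 * j + 1) * cos \<theta>)"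
proof (cases "cos \<theta> = 0")
  case True
  then show ?thesis by (simp add: tan_def)
next
  case False
  have "1 - sin \<theta> ^ (2 * n) = (cos \<theta>)\<^sup>2 * (\<Sum>j<n. sin \<theta> ^ (2 * j))"
    using one_diff_power_eq[of "(sin \<theta>)\<^sup>2" n] by (simp add: power_mult cos_squared_eq)
  then have "2 * tan \<theta> * (1 - sin \<theta> ^ (2 * n)) = 2 * (tan \<theta> * (cos \<theta>)\<^sup>2) * (\<Sum>j<n. sin \<theta> ^ (2 * j))"
    by simp
  also have "tan \<theta> * (cos \<theta>)\<^sup>2 = sin \<theta> * cos \<theta>"
    using False by (simp add: tan_def power2_eq_square)
  finally show ?thesis
    by (simp add: sum_distrib_left power_add mult_ac)
qed

lemma two_tan_mul_one_minus_sin_power_nonneg: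
  assumes "\<theta> \<in> {0..pi/2}"
  shows "0 \<le> 2 * tan \<theta> * (1 - sin \<theta> ^ (2 * n))"
proof -
  from assms have "0 \<le> \<theta>" "\<theta> \<le> pi/2" by auto
  with pi_gt_zero have "0 \<le> sin \<theta>" "0 \<le> cos \<theta>"
    by (intro sin_ge_zero cos_ge_zero; linarith)+
  then show ?thesis
    unfolding two_tan_mul_one_minus_sin_power by (intro sum_nonneg) simp
qed

lemma harm_has_integral_tan:
  "((\<lambda>\<theta>. 2 * tan \<theta> * (1 - sin \<theta> ^ (2 * n))) has_integral harm n) {0..pi/2}"
proof -
  define P where "P \<theta> = (\<Sum>j<n. sin \<theta> ^ (2 * j + 2) / (real j + 1))" for \<theta>
  have "((\<lambda>\<theta>. sin \<theta> ^ (2 * j + 2) / (real j + 1)) has_real_derivative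
      2 * sin \<theta> ^ (2 * j + 1) * cos \<theta>) (at \<theta>)" for j \<theta>
  proof -
    have "((\<lambda>\<theta>. sin \<theta> ^ (2 * j + 2)) has_real_derivative
        (real j + 1) * (2 * sin \<theta> ^ (2 * j + 1) * cos \<theta>)) (at \<theta>)"
      using DERIV_chain2[OF DERIV_pow DERIV_sin, of "2 * j + 2" \<theta>] by (simp add: algebra_simps)
    from DERIV_cdivide[OF this, of "real j + 1"] show ?thesis
      by simp
  qed
  then have "(P has_real_derivative 2 * tan \<theta> * (1 - sin \<theta> ^ (2 * n))) (at \<theta>)" for \<theta>
    unfolding P_def two_tan_mul_one_minus_sin_power by (intro DERIV_sum)
  moreover have "continuous_on {0..pi/2} P"
    unfolding P_def by (intro continuous_intros) auto
  ultimately have "((\<lambda>\<theta>. 2 * tan \<theta> * (1 - sin \<theta> ^ (2 * n))) has_integral P (pi/2) - P 0) {0..pi/2}"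
    by (intro fundamental_theorem_of_calculus_interior_strong[of "{}"])
      (auto simp: has_real_derivative_iff_has_vector_derivative)
  moreover have "P (pi/2) - P 0 = harm n"
    by (simp add: P_def harm_altdef inverse_eq_divide add.commute)
  ultimately show ?thesis by simp
qed

lemma sums_has_integral_nonneg:
  fixes h :: "nat \<Rightarrow> 'a::euclidean_space \<Rightarrow> real"
  assumes integral: "\<And>n. (h n has_integral a n) S"
    and nonneg: "\<And>n x. x \<in> S \<Longrightarrow> 0 \<le> h n x"
    and sums: "\<And>x. x \<in> S \<Longrightarrow> (\<lambda>n. h n x) sums g x"
    and g_integral: "(g has_integral I) S"
  shows "a sums I"
proof -
  define P where "P k x = (\<Sum>n<k. h n x)" for k x
  have P_integral: "(P k has_integral (\<Sum>n<k. a n)) S" for k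
    unfolding P_def by (intro has_integral_sum integral) simp
  have P_le: "P k x \<le> g x" if "x \<in> S" for k x
    using sums[OF that] nonneg[OF that] unfolding P_def
    by (metis sums_unique sums_summable sum_le_suminf finite_lessThan)
  have "g integrable_on S \<and> (\<lambda>k. integral S (P k)) \<longlonglongrightarrow> integral S g"
  proof (rule monotone_convergence_increasing)
    show "P k integrable_on S" for k using P_integral by blast
    show "P k x \<le> P (Suc k) x" if "x \<in> S" for k x
      using nonneg[OF that, of k] by (simp add: P_def)
    show "(\<lambda>k. P k x) \<longlonglongrightarrow> g x" if "x \<in> S" for x
      using sums[OF that] by (simp add: P_def sums_def)
    have "norm (integral S (P k)) \<le> integral S g" for k
    proof -
      have "0 \<le> integral S (P k)"
        using P_integral by (intro integral_nonneg) (auto simp: P_def intro!: sum_nonneg nonneg)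
      moreover have "integral S (P k) \<le> integral S g"
        using P_integral g_integral P_le by (intro integral_le) auto
      ultimately show ?thesis by simp
    qed
    then show "bounded (range (\<lambda>k. integral S (P k)))"
      by (intro boundedI) auto
  qed
  then show ?thesis
    using integral_unique[OF P_integral] integral_unique[OF g_integral] by (simp add: sums_def)
qed

lemma two_tan_mul_series:
  assumes "\<theta> \<in> {0..pi/2}"
  shows "(\<lambda>n. scaled_central_binomial (Suc n) / (2 * real n + 1)\<^sup>2 *
            (2 * tan \<theta> * (1 - sin \<theta> ^ (2 * Suc n))))
           sums (2 * tan \<theta> * (pi/2 - \<theta> * sin \<theta> - cos \<theta>))"
proof -
  from assms have "0 \<le> cos \<theta>" by (intro cos_ge_zero) auto
  have at_1: "(\<lambda>n. scaled_central_binomial (Suc n) / (2 * real n + 1)\<^sup>2) sums (pi/2 - 1)"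
    using arcsin_antiderivative_series[of 1] by simp
  have "arcsin (sin \<theta>) = \<theta>" using assms by (intro arcsin_sin) auto
  moreover have "sqrt (1 - (sin \<theta>)\<^sup>2) = cos \<theta>"
    using \<open>0 \<le> cos \<theta>\<close> by (simp flip: cos_squared_eq)
  ultimately have at_sin: "(\<lambda>n. scaled_central_binomial (Suc n) / (2 * real n + 1)\<^sup>2 * sin \<theta> ^ (2 * n + 2))
      sums (sin \<theta> * \<theta> + cos \<theta> - 1)"
    using arcsin_antiderivative_series[of "sin \<theta>"] by simp
  show ?thesis
    using sums_mult[OF sums_diff[OF at_1 at_sin], of "2 * tan \<theta>"]
    by (simp add: algebra_simps)
qed

lemma harm_central_binomial_summand_eq:
  "harm (Suc n) * real ((2 * Suc n) choose (Suc n)) / ((2 * real (Suc n) - 1) ^ 2 * 2 ^ (2 * Suc n))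
     = scaled_central_binomial (Suc n) / (2 * real n + 1)\<^sup>2 * harm (Suc n)"
proof -
  have "(2 :: real) ^ (2 * Suc n) = 4 ^ Suc n" by (simp add: power_mult)
  moreover have "2 * real (Suc n) - 1 = 2 * real n + 1" "2 * real n + 1 \<noteq> 0" by simp_all
  ultimately show ?thesis by (simp add: scaled_central_binomial_def field_simps)
qed

theorem mainTheorem8:
  shows "(\<lambda>n. harm (Suc n) * real ((2 * Suc n) choose (Suc n))
            / ((2 * real (Suc n) - 1) ^ 2 * 2 ^ (2 * Suc n)))
         sums (pi * (1 - ln 2) - 4 * (1 - catalan))"
  unfolding harm_central_binomial_summand_eq
proof (rule sums_has_integral_nonneg[OF _ _ two_tan_mul_series two_tan_mul_has_integral])
  fix n
  show "((\<lambda>\<theta>. scaled_central_binomial (Suc n) / (2 * real n + 1)\<^sup>2 *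
      (2 * tan \<theta> * (1 - sin \<theta> ^ (2 * Suc n)))) has_integral
        scaled_central_binomial (Suc n) / (2 * real n + 1)\<^sup>2 * harm (Suc n)) {0..pi/2}"
    by (intro has_integral_mult_right harm_has_integral_tan)
  fix \<theta> :: real
  assume "\<theta> \<in> {0..pi/2}"
  then show "0 \<le> scaled_central_binomial (Suc n) / (2 * real n + 1)\<^sup>2 *
      (2 * tan \<theta> * (1 - sin \<theta> ^ (2 * Suc n)))"
    by (intro mult_nonneg_nonneg divide_nonneg_nonneg scaled_central_binomial_nonneg
        two_tan_mul_one_minus_sin_power_nonneg) auto
qed

end
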